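(* For all $\Sigma\subseteq\mathsf{FOR}$ and $\varphi\in\mathsf{FOR}$: $\Sigma\vdash_{\mathcal{F}SN}\varphi$ if and only if $\Sigma\vDash_{\mathsf{R}^{sn}}\varphi$, where $\mathsf{R}^{sn}$ is the set of Epstein relations $\mathfrak{R}$ that are symmetric and satisfy: for all $\varphi,\psi$, $\langle\neg\varphi,\psi\rangle\in\mathfrak{R}$ implies $\langle\varphi,\psi\rangle\in\mathfrak{R}$.
   Context: Language: propositional letters $\Phi=\{p_0,p_1,\dots\}$; connectives $\neg$, $\lor,\wedge,\to,\leftrightarrow,\vartriangle,\looparrowright$; $\mathsf{FOR}$ the set of all formulas. An Epstein model is $\langle v,\mathfrak{R}\rangle$ with $v:\Phi\to\{0,1\}$ and $\mathfrak{R}\subseteq\mathsf{FOR}^2$ (an Epstein relation); truth: letters via $v$, boolean connectives classical, $\langle v,\mathfrak{R}\rangle\vDash\varphi\vartriangle\psi$ iff both true and $\langle\varphi,\psi\rangle\in\mathfrak{R}$; $\langle v,\mathfrak{R}\rangle\vDash\varphi\looparrowright\psi$ iff $\varphi\to\psi$ true and $\langle\varphi,\psi\rangle\in\mathfrak{R}$. For a set $\mathsf{R}$ of relations, $\Sigma\vDash_{\mathsf{R}}\varphi$ iff for every $\mathfrak{R}\in\mathsf{R}$ and every valuation $v$, if $\langle v,\mathfrak{R}\rangle$ satisfies all of $\Sigma$ then it satisfies $\varphi$. $\mathcal{F}$ is the least set containing all classical tautologies of the language and the axioms $(p\looparrowright q)\to(p\to q)$ and $(p\vartriangle q)\leftrightarrow((p\looparrowright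 q)\wedge(p\wedge q))$, closed under uniform substitution and modus ponens. $\mathcal{F}SN$ is the least set containing $\mathcal{F}$ and the axioms ($p,q$ distinct letters) $(s)\ (p\looparrowright q)\to((q\looparrowright p)\lor\neg(q\to p))$; $(n1)\ (\neg p\looparrowright q)\to((p\looparrowright q)\lor\neg(p\to q))$; $(n2)\ ((\neg\neg p\looparrowright q)\wedge\neg(\neg p\to q))\to(p\looparrowright q)$; $(sn)\ (\neg(p\to q)\wedge(\neg p\looparrowright q))\to(q\looparrowright p)$; $(ns)\ (\neg(\neg p\to q)\wedge(q\looparrowright\neg p))\to(p\looparrowright q)$, closed under uniform substitution and modus ponens. $\Sigma\vdash_{\mathcal{F}SN}\varphi$ iff there is a finite sequence ending in $\varphi$ each member of which is in $\mathcal{F}SN\cup\Sigma$ or follows from two earlier members by modus ponens. *)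

theory Defs
  imports Main
begin

datatype form =
    Var nat
  | Neg form
  | Or form form
  | And form form
  | Imp form form
  | Iff form form
  | EAnd form form
  | EImp form form

fun sat :: "(nat \<Rightarrow> bool) \<Rightarrow> (form \<times> form) set \<Rightarrow> form \<Rightarrow> bool" where
  "sat v R (Var n) = v n"
| "sat v R (Neg a) = (\<not> sat v R a)"
| "sat v R (Or a b) = (sat v R a \<or> sat v R b)"
| "sat v R (And a b) = (sat v R a \<and> sat v R b)"
| "sat v R (Imp a b) = (sat v R a \<longrightarrow> sat v R b)"
| "sat v R (Iff a b) = (sat v R a \<longleftrightarrow> sat v R b)"
| "sat v R (EAnd a b) = (sat v R a \<and> sat v R b \<and> (a, b) \<in> R)"
| "sat v R (EImp a b) = ((sat v R a \<longrightarrow> sat v R b) \<and> (a, b) \<in> R)"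

definition entails :: "(form \<times> form) set set \<Rightarrow> form set \<Rightarrow> form \<Rightarrow> bool" where
  "entails RR \<Sigma> \<phi> \<longleftrightarrow>
     (\<forall>R \<in> RR. \<forall>v. (\<forall>\<sigma>\<in>\<Sigma>. sat v R \<sigma>) \<longrightarrow> sat v R \<phi>)"

definition Rsn :: "(form \<times> form) set set" where
  "Rsn = {R. sym R \<and> (\<forall>\<phi> \<psi>. (Neg \<phi>, \<psi>) \<in> R \<longrightarrow> (\<phi>, \<psi>) \<in> R)}"

text \<open>Classical (boolean) evaluation treating formulas with main connective
  triangle / looparrowright as atoms: their values are arbitrary functions f, g
  of the (syntactic) argument pair.\<close>

fun beval :: "(nat \<Rightarrow> bool) \<Rightarrow> (form \<Rightarrow> form \<Rightarrow> bool) \<Rightarrow> (form \<Rightarrow> form \<Rightarrow> bool) \<Rightarrow> form \<Rightarrow> bool" where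
  "beval v f g (Var n) = v n"
| "beval v f g (Neg a) = (\<not> beval v f g a)"
| "beval v f g (Or a b) = (beval v f g a \<or> beval v f g b)"
| "beval v f g (And a b) = (beval v f g a \<and> beval v f g b)"
| "beval v f g (Imp a b) = (beval v f g a \<longrightarrow> beval v f g b)"
| "beval v f g (Iff a b) = (beval v f g a \<longleftrightarrow> beval v f g b)"
| "beval v f g (EAnd a b) = f a b"
| "beval v f g (EImp a b) = g a b"

definition tautology :: "form \<Rightarrow> bool" where
  "tautology \<phi> \<longleftrightarrow> (\<forall>v f g. beval v f g \<phi>)"

fun subst :: "(nat \<Rightarrow> form) \<Rightarrow> form \<Rightarrow> form" where
  "subst s (Var n) = s n"
| "subst s (Neg a) = Neg (subst s a)"
| "subst s (Or a b) = Or (subst s a) (subst s b)"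
| "subst s (And a b) = And (subst s a) (subst s b)"
| "subst s (Imp a b) = Imp (subst s a) (subst s b)"
| "subst s (Iff a b) = Iff (subst s a) (subst s b)"
| "subst s (EAnd a b) = EAnd (subst s a) (subst s b)"
| "subst s (EImp a b) = EImp (subst s a) (subst s b)"

abbreviation "pp \<equiv> Var 0"
abbreviation "qq \<equiv> Var 1"

inductive_set FSN :: "form set" where
  taut: "tautology \<phi> \<Longrightarrow> \<phi> \<in> FSN"
| ax1: "Imp (EImp pp qq) (Imp pp qq) \<in> FSN"
| ax2: "Iff (EAnd pp qq) (And (EImp pp qq) (And pp qq)) \<in> FSN"
| ax_s: "Imp (EImp pp qq) (Or (EImp qq pp) (Neg (Imp qq pp))) \<in> FSN"
| ax_n1: "Imp (EImp (Neg pp) qq) (Or (EImp pp qq) (Neg (Imp pp qq))) \<in> FSN"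
| ax_n2: "Imp (And (EImp (Neg (Neg pp)) qq) (Neg (Imp (Neg pp) qq))) (EImp pp qq) \<in> FSN"
| ax_sn: "Imp (And (Neg (Imp pp qq)) (EImp (Neg pp) qq)) (EImp qq pp) \<in> FSN"
| ax_ns: "Imp (And (Neg (Imp (Neg pp) qq)) (EImp qq (Neg pp))) (EImp pp qq) \<in> FSN"
| sub: "\<phi> \<in> FSN \<Longrightarrow> subst s \<phi> \<in> FSN"
| mp: "\<phi> \<in> FSN \<Longrightarrow> Imp \<phi> \<psi> \<in> FSN \<Longrightarrow> \<psi> \<in> FSN"

definition derivable :: "form set \<Rightarrow> form \<Rightarrow> bool" where
  "derivable \<Sigma> \<phi> \<longleftrightarrow>
     (\<exists>xs. xs \<noteq> [] \<and> last xs = \<phi> \<and>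
        (\<forall>i < length xs. xs ! i \<in> FSN \<or> xs ! i \<in> \<Sigma> \<or>
           (\<exists>j < i. \<exists>k < i. xs ! k = Imp (xs ! j) (xs ! i))))"

end

theory Submission
  imports Defs
begin

text \<open>Soundness holds because every axiom is true in every model whose relation is symmetric
  and closed under removing a negation from the left argument, and truth in such models is
  preserved by uniform substitution (the substituted model again has such a relation).
  For completeness, extend a theory not containing \<open>\<phi>\<close> to a maximal one \<open>M\<close> avoiding \<open>\<phi>\<close>;
  it decides every formula. Relate \<open>x\<close> and \<open>y\<close> canonically iff each of \<open>x \<rightarrow> y\<close>, \<open>y \<rightarrow> x\<close>
  that lies in \<open>M\<close> has its Epstein counterpart in \<open>M\<close>. This relation is symmetric by
  construction, axioms (s), (n1), (sn), (ns) make it closed under removing a negation, and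
  by (s) and the axioms of F the model with valuation \<open>p\<^sub>n \<mapsto> (p\<^sub>n \<in> M)\<close> and this
  relation satisfies exactly the formulas in \<open>M\<close>, so it refutes \<open>\<phi>\<close>.\<close>

section \<open>Derivations and the consequence operator\<close>

inductive_set Cn :: "form set \<Rightarrow> form set" for S :: "form set" where
  Cn_FSN: "a \<in> FSN \<Longrightarrow> a \<in> Cn S"
| Cn_hyp: "a \<in> S \<Longrightarrow> a \<in> Cn S"
| Cn_mp: "a \<in> Cn S \<Longrightarrow> Imp a b \<in> Cn S \<Longrightarrow> b \<in> Cn S"

definition derivation :: "form set \<Rightarrow> form list \<Rightarrow> bool" where
  "derivation S xs \<longleftrightarrow> (\<forall>i < length xs. xs ! i \<in> FSN \<or> xs ! i \<in> S \<or>
     (\<exists>j < i. \<exists>k < i. xs ! k = Imp (xs ! j) (xs ! i)))"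

lemma derivable_iff_derivation:
  "derivable S a \<longleftrightarrow> (\<exists>xs. xs \<noteq> [] \<and> last xs = a \<and> derivation S xs)"
  unfolding derivable_def derivation_def by blast

lemma derivation_append:
  assumes xs: "derivation S xs" and ys: "derivation S ys"
  shows "derivation S (xs @ ys)"
  unfolding derivation_def
proof (intro allI impI)
  fix i assume i: "i < length (xs @ ys)"
  show "(xs @ ys) ! i \<in> FSN \<or> (xs @ ys) ! i \<in> S \<or>
    (\<exists>j<i. \<exists>k<i. (xs @ ys) ! k = Imp ((xs @ ys) ! j) ((xs @ ys) ! i))"
  proof (cases "i < length xs")
    case True
    with xs show ?thesis unfolding derivation_def
      by (auto simp: nth_append) (metis order.strict_trans)
  next
    case False
    define i' where "i' = i - length xs"
    have i': "i' < length ys" "i = length xs + i'" using i False by (auto simp: i'_def)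
    from ys i'(1) have "ys ! i' \<in> FSN \<or> ys ! i' \<in> S \<or>
      (\<exists>j<i'. \<exists>k<i'. ys ! k = Imp (ys ! j) (ys ! i'))" unfolding derivation_def by blast
    then show ?thesis
    proof (elim disjE exE conjE)
      fix j k assume "j < i'" "k < i'" "ys ! k = Imp (ys ! j) (ys ! i')"
      then show ?thesis using i'
        by (intro disjI2 exI[of _ "length xs + j"] conjI exI[of _ "length xs + k"])
          (auto simp: nth_append)
    qed (use i' in \<open>auto simp: nth_append\<close>)
  qed
qed

lemma derivation_snoc_mp:
  assumes xs: "derivation S xs" and "a \<in> set xs" and "Imp a b \<in> set xs"
  shows "derivation S (xs @ [b])"
  unfolding derivation_def
proof (intro allI impI)
  fix i assume "i < length (xs @ [b])"
  then consider "i < length xs" | "i = length xs" by fastforce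
  then show "(xs @ [b]) ! i \<in> FSN \<or> (xs @ [b]) ! i \<in> S \<or>
    (\<exists>j<i. \<exists>k<i. (xs @ [b]) ! k = Imp ((xs @ [b]) ! j) ((xs @ [b]) ! i))"
  proof cases
    case 1
    have same: "(xs @ [b]) ! n = xs ! n" if "n \<le> i" for n
      using 1 that by (simp add: nth_append)
    from xs 1 have "xs ! i \<in> FSN \<or> xs ! i \<in> S \<or>
      (\<exists>j<i. \<exists>k<i. xs ! k = Imp (xs ! j) (xs ! i))" unfolding derivation_def by blast
    then show ?thesis using same[OF less_imp_le] same[OF order_refl] by auto
  next
    case 2
    obtain j k where "j < length xs" "xs ! j = a" "k < length xs" "xs ! k = Imp a b"
      using assms(2,3) by (auto simp: in_set_conv_nth)
    with 2 show ?thesis by (auto simp: nth_append)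
  qed
qed

lemma Cn_imp_derivation:
  "a \<in> Cn S \<Longrightarrow> \<exists>xs. xs \<noteq> [] \<and> last xs = a \<and> derivation S xs"
proof (induction rule: Cn.induct)
  case (Cn_FSN a)
  then show ?case by (intro exI[of _ "[a]"]) (auto simp: derivation_def)
next
  case (Cn_hyp a)
  then show ?case by (intro exI[of _ "[a]"]) (auto simp: derivation_def)
next
  case (Cn_mp a b)
  then obtain xs ys where xs: "xs \<noteq> []" "last xs = a" "derivation S xs"
    and ys: "ys \<noteq> []" "last ys = Imp a b" "derivation S ys" by blast
  have "a \<in> set (xs @ ys)" "Imp a b \<in> set (xs @ ys)"
    using last_in_set[OF xs(1)] last_in_set[OF ys(1)] xs(2) ys(2) by auto
  with derivation_append[OF xs(3) ys(3)] have "derivation S (xs @ ys @ [b])"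
    unfolding append_assoc[symmetric] by (rule derivation_snoc_mp)
  then show ?case by (intro exI[of _ "xs @ ys @ [b]"]) auto
qed

lemma derivation_imp_Cn:
  assumes "derivation S xs"
  shows "i < length xs \<Longrightarrow> xs ! i \<in> Cn S"
proof (induction i rule: less_induct)
  case (less i)
  with assms have "xs ! i \<in> FSN \<or> xs ! i \<in> S \<or>
    (\<exists>j<i. \<exists>k<i. xs ! k = Imp (xs ! j) (xs ! i))" unfolding derivation_def by blast
  then show ?case
  proof (elim disjE exE conjE)
    fix j k assume "j < i" "k < i" "xs ! k = Imp (xs ! j) (xs ! i)"
    then show ?thesis using less by (metis Cn_mp order.strict_trans)
  qed (auto intro: Cn.intros)
qed

lemma derivable_iff_Cn: "derivable S a \<longleftrightarrow> a \<in> Cn S"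
proof
  assume "derivable S a"
  then obtain xs where "xs \<noteq> []" "last xs = a" "derivation S xs"
    unfolding derivable_iff_derivation by blast
  then show "a \<in> Cn S"
    using derivation_imp_Cn[of S xs "length xs - 1"] by (simp add: last_conv_nth)
qed (simp add: derivable_iff_derivation Cn_imp_derivation)

lemma Cn_Cn: "a \<in> Cn (Cn S) \<Longrightarrow> a \<in> Cn S"
  by (induction rule: Cn.induct) (auto intro: Cn.intros)

lemma Cn_tautology: "tautology a \<Longrightarrow> a \<in> Cn S"
  by (intro Cn_FSN FSN.taut)

lemma deduction_theorem:
  assumes "c \<in> Cn (insert p S)"
  shows "Imp p c \<in> Cn S"
  using assms
proof (induction rule: Cn.induct)
  case (Cn_FSN a)
  moreover have "Imp a (Imp p a) \<in> Cn S" by (rule Cn_tautology) (simp add: tautology_def)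
  ultimately show ?case by (blast intro: Cn.Cn_FSN Cn.Cn_mp)
next
  case (Cn_hyp a)
  show ?case
  proof (cases "a = p")
    case True
    then show ?thesis by (auto intro: Cn_tautology simp: tautology_def)
  next
    case False
    then have "a \<in> Cn S" using Cn_hyp by (auto intro: Cn.Cn_hyp)
    moreover have "Imp a (Imp p a) \<in> Cn S" by (rule Cn_tautology) (simp add: tautology_def)
    ultimately show ?thesis by (rule Cn.Cn_mp)
  qed
next
  case (Cn_mp a b)
  have "Imp (Imp p (Imp a b)) (Imp (Imp p a) (Imp p b)) \<in> Cn S"
    by (rule Cn_tautology) (simp add: tautology_def)
  with Cn_mp.IH show ?case by (blast intro: Cn.Cn_mp)
qed

section \<open>Soundness\<close>

lemma beval_sat: "beval v (\<lambda>a b. sat v R (EAnd a b)) (\<lambda>a b. sat v R (EImp a b)) \<phi> = sat v R \<phi>"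
  by (induction \<phi>) auto

lemma tautology_sat: "tautology \<phi> \<Longrightarrow> sat v R \<phi>"
  unfolding tautology_def by (metis beval_sat)

lemma sat_subst:
  "sat v R (subst s \<phi>) = sat (\<lambda>n. sat v R (s n)) {(a, b). (subst s a, subst s b) \<in> R} \<phi>"
  by (induction \<phi>) auto

lemma RsnI:
  "(\<And>a b. (a, b) \<in> R \<Longrightarrow> (b, a) \<in> R) \<Longrightarrow> (\<And>a b. (Neg a, b) \<in> R \<Longrightarrow> (a, b) \<in> R) \<Longrightarrow> R \<in> Rsn"
  unfolding Rsn_def sym_def by blast

lemma Rsn_symD: "R \<in> Rsn \<Longrightarrow> (a, b) \<in> R \<Longrightarrow> (b, a) \<in> R"
  unfolding Rsn_def by (blast dest: symD)

lemma Rsn_NegD: "R \<in> Rsn \<Longrightarrow> (Neg a, b) \<in> R \<Longrightarrow> (a, b) \<in> R"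
  unfolding Rsn_def by blast

lemma Rsn_subst: "R \<in> Rsn \<Longrightarrow> {(a, b). (subst s a, subst s b) \<in> R} \<in> Rsn"
  by (rule RsnI) (auto intro: Rsn_symD Rsn_NegD)

lemma FSN_sound: "\<phi> \<in> FSN \<Longrightarrow> R \<in> Rsn \<Longrightarrow> sat v R \<phi>"
proof (induction arbitrary: v R rule: FSN.induct)
  case (sub \<phi> s)
  then show ?case by (simp only: sat_subst Rsn_subst)
next
  case ax_s
  then show ?case using Rsn_symD[OF ax_s, of pp qq] by auto
next
  case ax_n1
  then show ?case using Rsn_NegD[OF ax_n1, of pp qq] by auto
next
  case ax_n2
  then show ?case using Rsn_NegD[OF ax_n2, of pp qq] Rsn_NegD[OF ax_n2, of "Neg pp" qq] by auto
next
  case ax_sn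
  then show ?case using Rsn_NegD[OF ax_sn, of pp qq] Rsn_symD[OF ax_sn, of pp qq] by auto
next
  case ax_ns
  then show ?case using Rsn_NegD[OF ax_ns, of pp qq] Rsn_symD[OF ax_ns, of qq "Neg pp"] by auto
qed (auto simp: tautology_sat)

lemma Cn_sound: "a \<in> Cn S \<Longrightarrow> R \<in> Rsn \<Longrightarrow> \<forall>\<sigma>\<in>S. sat v R \<sigma> \<Longrightarrow> sat v R a"
  by (induction rule: Cn.induct) (auto simp: FSN_sound)

section \<open>Completeness\<close>

locale deductively_closed =
  fixes M :: "form set"
  assumes closed: "Cn M \<subseteq> M"
begin

lemma mp: "a \<in> M \<Longrightarrow> Imp a b \<in> M \<Longrightarrow> b \<in> M"
  using closed by (blast intro: Cn_hyp Cn_mp)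

lemma FSN_mem: "a \<in> FSN \<Longrightarrow> a \<in> M"
  using closed by (blast intro: Cn_FSN)

lemma tautology_mem: "tautology a \<Longrightarrow> a \<in> M"
  by (simp add: FSN.taut FSN_mem)

lemma tautology_mp: "tautology (Imp a b) \<Longrightarrow> a \<in> M \<Longrightarrow> b \<in> M"
  using mp tautology_mem by blast

end

locale complete_theory = deductively_closed +
  assumes complete: "\<And>x. x \<in> M \<or> Neg x \<in> M"
    and consistent: "\<And>x. \<not> (x \<in> M \<and> Neg x \<in> M)"
begin

lemma Neg_mem[simp]: "Neg a \<in> M \<longleftrightarrow> a \<notin> M"
  using complete consistent by blast

lemma Imp_mem[simp]: "Imp a b \<in> M \<longleftrightarrow> (a \<in> M \<longrightarrow> b \<in> M)"
proof
  show "Imp a b \<in> M \<Longrightarrow> a \<in> M \<longrightarrow> b \<in> M" using mp by blast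
  have "tautology (Imp b (Imp a b))" "tautology (Imp (Neg a) (Imp a b))"
    by (simp_all add: tautology_def)
  then show "a \<in> M \<longrightarrow> b \<in> M \<Longrightarrow> Imp a b \<in> M"
    using tautology_mp Neg_mem by blast
qed

lemma Or_mem[simp]: "Or a b \<in> M \<longleftrightarrow> (a \<in> M \<or> b \<in> M)"
proof -
  have "tautology (Imp (Or a b) (Imp (Neg a) b))" "tautology (Imp a (Or a b))"
    "tautology (Imp b (Or a b))"
    by (simp_all add: tautology_def)
  then show ?thesis using tautology_mp Imp_mem Neg_mem by blast
qed

lemma And_mem[simp]: "And a b \<in> M \<longleftrightarrow> (a \<in> M \<and> b \<in> M)"
proof -
  have "tautology (Imp (And a b) a)" "tautology (Imp (And a b) b)"
    "tautology (Imp a (Imp b (And a b)))"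
    by (simp_all add: tautology_def)
  then show ?thesis using tautology_mp Imp_mem by blast
qed

lemma Iff_mem[simp]: "Iff a b \<in> M \<longleftrightarrow> (a \<in> M \<longleftrightarrow> b \<in> M)"
proof -
  have "tautology (Imp (Iff a b) (Imp a b))" "tautology (Imp (Iff a b) (Imp b a))"
    "tautology (Imp (Imp a b) (Imp (Imp b a) (Iff a b)))"
    by (auto simp: tautology_def)
  then show ?thesis using tautology_mp Imp_mem by blast
qed

lemma FSN_instance_mem: "\<phi> \<in> FSN \<Longrightarrow> subst (\<lambda>n. if n = 0 then a else b) \<phi> \<in> M"
  by (intro FSN_mem FSN.sub)

lemma EImp_mem_Imp: "EImp a b \<in> M \<Longrightarrow> Imp a b \<in> M"
  using FSN_instance_mem[OF FSN.ax1, of a b] by simp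

lemma EAnd_mem: "EAnd a b \<in> M \<longleftrightarrow> EImp a b \<in> M \<and> a \<in> M \<and> b \<in> M"
  using FSN_instance_mem[OF FSN.ax2, of a b] by simp

lemma EImp_mem_swap: "EImp a b \<in> M \<Longrightarrow> Imp b a \<in> M \<Longrightarrow> EImp b a \<in> M"
  using FSN_instance_mem[OF FSN.ax_s, of a b] by simp

lemma EImp_mem_Neg_left: "EImp (Neg a) b \<in> M \<Longrightarrow> Imp a b \<in> M \<Longrightarrow> EImp a b \<in> M"
  using FSN_instance_mem[OF FSN.ax_n1, of a b] by simp

lemma EImp_mem_Neg_left_swap: "Imp a b \<notin> M \<Longrightarrow> EImp (Neg a) b \<in> M \<Longrightarrow> EImp b a \<in> M"
  using FSN_instance_mem[OF FSN.ax_sn, of a b] by simp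

lemma EImp_mem_Neg_right_swap:
  "Imp (Neg a) b \<notin> M \<Longrightarrow> EImp b (Neg a) \<in> M \<Longrightarrow> EImp a b \<in> M"
  using FSN_instance_mem[OF FSN.ax_ns, of a b] by simp

definition canonical_relation :: "(form \<times> form) set" where
  "canonical_relation =
     {(x, y). (Imp x y \<in> M \<longrightarrow> EImp x y \<in> M) \<and> (Imp y x \<in> M \<longrightarrow> EImp y x \<in> M)}"

lemma canonical_relation_Rsn: "canonical_relation \<in> Rsn"
proof (rule RsnI)
  show "(b, a) \<in> canonical_relation" if "(a, b) \<in> canonical_relation" for a b
    using that unfolding canonical_relation_def by auto
  show "(a, b) \<in> canonical_relation" if "(Neg a, b) \<in> canonical_relation" for a b
  proof -
    from that have "Imp (Neg a) b \<in> M \<Longrightarrow> EImp (Neg a) b \<in> M"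
      and "Imp b (Neg a) \<in> M \<Longrightarrow> EImp b (Neg a) \<in> M"
      unfolding canonical_relation_def by auto
    then show ?thesis
      unfolding canonical_relation_def
      by (cases "a \<in> M"; cases "b \<in> M")
        (auto intro: EImp_mem_Neg_left EImp_mem_Neg_left_swap EImp_mem_Neg_right_swap
          EImp_mem_swap[OF EImp_mem_Neg_left] EImp_mem_swap[OF EImp_mem_Neg_right_swap])
  qed
qed

lemma EImp_mem_iff: "EImp a b \<in> M \<longleftrightarrow> Imp a b \<in> M \<and> (a, b) \<in> canonical_relation"
  unfolding canonical_relation_def using EImp_mem_Imp EImp_mem_swap by blast

lemma truth_lemma: "sat (\<lambda>n. Var n \<in> M) canonical_relation \<phi> \<longleftrightarrow> \<phi> \<in> M"
  by (induction \<phi>) (auto simp: EImp_mem_iff EAnd_mem)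

end

lemma Cn_Union_chain:
  assumes "C \<noteq> {}" and chain: "subset.chain {T. Cn T \<subseteq> T} C"
  shows "Cn (\<Union>C) \<subseteq> \<Union>C"
proof
  fix x assume "x \<in> Cn (\<Union>C)"
  then show "x \<in> \<Union>C"
  proof (induction rule: Cn.induct)
    case (Cn_FSN a)
    obtain T where "T \<in> C" using \<open>C \<noteq> {}\<close> by blast
    moreover have "a \<in> Cn T" using Cn_FSN by (rule Cn.Cn_FSN)
    ultimately show ?case using chain unfolding subset.chain_def by blast
  next
    case (Cn_mp a b)
    then obtain X Y where "X \<in> C" "Y \<in> C" "a \<in> X" "Imp a b \<in> Y" by blast
    with chain obtain Z where Z: "Z \<in> C" "a \<in> Z" "Imp a b \<in> Z"
      unfolding subset.chain_def by blast
    then have "b \<in> Cn Z" by (meson Cn_hyp Cn.Cn_mp)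
    with Z chain show ?case unfolding subset.chain_def by blast
  qed simp
qed

lemma Lindenbaum:
  assumes "\<phi> \<notin> Cn S"
  obtains M where "S \<subseteq> M" "deductively_closed M" "\<phi> \<notin> M"
    "\<And>p. p \<notin> M \<Longrightarrow> \<phi> \<in> Cn (insert p M)"
proof -
  define A where "A = {T. S \<subseteq> T \<and> Cn T \<subseteq> T \<and> \<phi> \<notin> T}"
  have "Cn S \<in> A"
    unfolding A_def using assms Cn_Cn Cn_hyp by blast
  then have "A \<noteq> {}" by blast
  moreover have "\<Union>C \<in> A" if "C \<noteq> {}" and chain: "subset.chain A C" for C
  proof -
    have "subset.chain {T. Cn T \<subseteq> T} C"
      using chain unfolding subset.chain_def A_def by blast
    then have "Cn (\<Union>C) \<subseteq> \<Union>C" by (rule Cn_Union_chain[OF \<open>C \<noteq> {}\<close>])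
    moreover have "S \<subseteq> \<Union>C" "\<phi> \<notin> \<Union>C"
      using chain \<open>C \<noteq> {}\<close> unfolding subset.chain_def A_def by blast+
    ultimately show ?thesis unfolding A_def by blast
  qed
  ultimately obtain M where "M \<in> A" and max: "\<And>X. X \<in> A \<Longrightarrow> M \<subseteq> X \<Longrightarrow> X = M"
    using subset_Zorn_nonempty[of A] by blast
  then have M: "S \<subseteq> M" "Cn M \<subseteq> M" "\<phi> \<notin> M" unfolding A_def by blast+
  show ?thesis
  proof (rule that)
    show "deductively_closed M" using M(2) by (rule deductively_closed.intro)
  next
    fix p assume "p \<notin> M"
    have "M \<subseteq> Cn (insert p M)" "p \<in> Cn (insert p M)" by (auto intro: Cn_hyp)
    with \<open>p \<notin> M\<close> max have "Cn (insert p M) \<notin> A" by blast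
    moreover have "S \<subseteq> Cn (insert p M)" "Cn (Cn (insert p M)) \<subseteq> Cn (insert p M)"
      using M(1) \<open>M \<subseteq> Cn (insert p M)\<close> Cn_Cn by blast+
    ultimately show "\<phi> \<in> Cn (insert p M)" unfolding A_def by blast
  qed (use M in blast)+
qed

text \<open>A maximal theory avoiding \<open>\<phi>\<close> decides every \<open>x\<close>: if neither \<open>x\<close> nor \<open>\<not>x\<close> were in it,
  both \<open>x \<rightarrow> \<phi>\<close> and \<open>\<not>x \<rightarrow> \<phi>\<close> would be, hence \<open>\<phi>\<close>.\<close>

lemma complete_theory_Lindenbaum:
  assumes "\<phi> \<notin> Cn S"
  obtains M where "complete_theory M" "S \<subseteq> M" "\<phi> \<notin> M"
proof -
  obtain M where "S \<subseteq> M" "deductively_closed M" "\<phi> \<notin> M"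
    and maximal: "\<And>p. p \<notin> M \<Longrightarrow> \<phi> \<in> Cn (insert p M)"
    using Lindenbaum[OF assms] by blast
  interpret deductively_closed M by fact
  have "complete_theory_axioms M"
  proof
    fix x
    have "p \<notin> M \<Longrightarrow> Imp p \<phi> \<in> M" for p
      using maximal deduction_theorem closed by blast
    moreover have "Imp (Imp x \<phi>) (Imp (Imp (Neg x) \<phi>) \<phi>) \<in> M"
      by (rule tautology_mem) (auto simp: tautology_def)
    ultimately show "x \<in> M \<or> Neg x \<in> M" using mp \<open>\<phi> \<notin> M\<close> by blast
    have "Imp x (Imp (Neg x) \<phi>) \<in> M" by (rule tautology_mem) (simp add: tautology_def)
    then show "\<not> (x \<in> M \<and> Neg x \<in> M)" using mp \<open>\<phi> \<notin> M\<close> by blast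
  qed
  with \<open>deductively_closed M\<close> have "complete_theory M"
    by (rule complete_theory.intro)
  then show ?thesis using \<open>S \<subseteq> M\<close> \<open>\<phi> \<notin> M\<close> by (rule that)
qed

lemma completeness: "entails Rsn S \<phi> \<Longrightarrow> \<phi> \<in> Cn S"
proof (rule ccontr)
  assume "entails Rsn S \<phi>" "\<phi> \<notin> Cn S"
  then obtain M where "complete_theory M" "S \<subseteq> M" "\<phi> \<notin> M"
    using complete_theory_Lindenbaum by blast
  then show False
    using \<open>entails Rsn S \<phi>\<close> complete_theory.truth_lemma complete_theory.canonical_relation_Rsn
    unfolding entails_def by blast
qed

theorem mainTheorem18:
  fixes \<Sigma> :: "form set" and \<phi> :: form
  shows "derivable \<Sigma> \<phi> \<longleftrightarrow> entails Rsn \<Sigma> \<phi>"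
  using Cn_sound completeness unfolding derivable_iff_Cn entails_def by blast

end
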